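(* Let $k\ge1$ and let $f:\mathbb{R}^{2k}\to\mathbb{R}^{2k}$ be analytic on all of $\mathbb{R}^{2k}$ (an entire function). If there is $M>0$ with $|f(x)|\le M$ for all $x\in\mathbb{R}^{2k}$ (Euclidean norm), then $f$ is constant.
   Context: Let $n=2k$ and let $\mathfrak g$ be the real $n\times n$ matrix with $\mathfrak g_{i,i+1}=1$ ($1\le i\le n-1$), $\mathfrak g_{n,1}=-1$, other entries $0$. For $u\in\mathbb{R}^n$ set $\varsigma(u)=\sum_{\ell=1}^n u_\ell\mathfrak g^{\ell-1}$ and $u\circledast v=\varsigma^{-1}(\varsigma(u)\varsigma(v))$. Let $\mathcal G_n=\{x:\det\varsigma(x)\ne0\}$ and $\delta^{-1}$ the $\circledast$-inverse of $\delta\in\mathcal G_n$. $f:\Omega\to\mathbb{R}^n$ is differentiable at $a$ if $f'(a)=\lim_{\delta\to0,\delta\in\mathcal G_n}(f(a+\delta)-f(a))\circledast\delta^{-1}$ exists; $f$ is analytic on $\Omega$ if it is differentiable at every point of $\Omega$ and all second order partial derivatives of its components are continuous on $\Omega$. *)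

theory Defs
  imports "HOL-Analysis.Analysis"
begin

text \<open>R^n is modelled as real^'n (Euclidean norm) together with a coordinate labelling
  idx :: nat => 'n, a bijection from {1..CARD('n)} onto the index type, so that the
  l-th coordinate of u is u $ idx l.\<close>

definition pos :: "(nat \<Rightarrow> 'n::finite) \<Rightarrow> 'n \<Rightarrow> nat" where
  "pos idx a = inv_into {1..CARD('n)} idx a"

definition gmat :: "(nat \<Rightarrow> 'n::finite) \<Rightarrow> real^'n^'n" where
  "gmat idx = (\<chi> a b. if pos idx b = pos idx a + 1 then 1
                     else if pos idx a = CARD('n) \<and> pos idx b = 1 then -1 else 0)"

fun mpow :: "real^'n^'n \<Rightarrow> nat \<Rightarrow> real^'n^'n" where
  "mpow A 0 = mat 1"
| "mpow A (Suc m) = A ** mpow A m"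

definition varsigma :: "(nat \<Rightarrow> 'n::finite) \<Rightarrow> real^'n \<Rightarrow> real^'n^'n" where
  "varsigma idx u = (\<Sum>l\<in>{1..CARD('n)}. (u $ idx l) *\<^sub>R mpow (gmat idx) (l - 1))"

definition cstar :: "(nat \<Rightarrow> 'n::finite) \<Rightarrow> real^'n \<Rightarrow> real^'n \<Rightarrow> real^'n" where
  "cstar idx u v = (THE w. varsigma idx w = varsigma idx u ** varsigma idx v)"

definition Gset :: "(nat \<Rightarrow> 'n::finite) \<Rightarrow> (real^'n) set" where
  "Gset idx = {x. det (varsigma idx x) \<noteq> 0}"

definition cunit :: "(nat \<Rightarrow> 'n::finite) \<Rightarrow> real^'n" where
  "cunit idx = (THE e. varsigma idx e = mat 1)"

definition cinv :: "(nat \<Rightarrow> 'n::finite) \<Rightarrow> real^'n \<Rightarrow> real^'n" where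
  "cinv idx d = (THE w. cstar idx d w = cunit idx)"

definition has_cderiv_at ::
  "(nat \<Rightarrow> 'n::finite) \<Rightarrow> (real^'n \<Rightarrow> real^'n) \<Rightarrow> real^'n \<Rightarrow> real^'n \<Rightarrow> bool" where
  "has_cderiv_at idx f D a \<longleftrightarrow>
     ((\<lambda>d. cstar idx (f (a + d) - f a) (cinv idx d)) \<longlongrightarrow> D) (at 0 within Gset idx)"

definition cdifferentiable_at ::
  "(nat \<Rightarrow> 'n::finite) \<Rightarrow> (real^'n \<Rightarrow> real^'n) \<Rightarrow> real^'n \<Rightarrow> bool" where
  "cdifferentiable_at idx f a \<longleftrightarrow> (\<exists>D. has_cderiv_at idx f D a)"

definition partial_exists :: "'n::finite \<Rightarrow> (real^'n \<Rightarrow> real) \<Rightarrow> real^'n \<Rightarrow> bool" where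
  "partial_exists i g x \<longleftrightarrow> (\<lambda>t. g (x + t *\<^sub>R axis i 1)) differentiable (at 0)"

definition partial :: "'n::finite \<Rightarrow> (real^'n \<Rightarrow> real) \<Rightarrow> real^'n \<Rightarrow> real" where
  "partial i g x = deriv (\<lambda>t. g (x + t *\<^sub>R axis i 1)) 0"

definition canalytic_on ::
  "(nat \<Rightarrow> 'n::finite) \<Rightarrow> (real^'n) set \<Rightarrow> (real^'n \<Rightarrow> real^'n) \<Rightarrow> bool" where
  "canalytic_on idx \<Omega> f \<longleftrightarrow>
     (\<forall>a\<in>\<Omega>. cdifferentiable_at idx f a) \<and>
     (\<forall>m i j. (\<forall>x\<in>\<Omega>. partial_exists i (\<lambda>y. f y $ m) x) \<and>
              (\<forall>x\<in>\<Omega>. partial_exists j (partial i (\<lambda>y. f y $ m)) x) \<and>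
              continuous_on \<Omega> (partial j (partial i (\<lambda>y. f y $ m))))"

end

theory Submission
  imports Defs "HOL-Complex_Analysis.Complex_Analysis"
begin

(* The matrices varsigma u are exactly the real matrices commuting with g, and g^n = -1, so
   (R^n, \<circledast>) is a real form of C[x]/(x^n + 1).  For each of the n complex roots w of
   w^n = -1 the vector (1, w, ..., w^(n-1)) is a common eigenvector of these matrices, so
   character w u = sum_l u_l w^(l-1) is multiplicative; as n is even, w is not real and
   character w maps R^n onto C.  Applying character w to the limit defining f' shows that
   character w o f has real derivative h \<mapsto> character w (f' x) * character w h.  Hence
   character w o f is constant along the kernel of character w and holomorphic on complementary
   complex lines, where it is bounded, so it is constant by Liouville's theorem.  A polynomial of
   degree < n vanishing at the n roots is zero, so f is constant. *)

section \<open>Continuous partial derivatives\<close>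

lemma partial_increment_bound:
  fixes g p :: "real^'n \<Rightarrow> real"
  assumes pd: "\<And>z. ((\<lambda>t. g (z + t *\<^sub>R axis i 1)) has_real_derivative p z) (at 0)"
    and close: "\<And>t. \<bar>t\<bar> \<le> \<bar>s\<bar> \<Longrightarrow> \<bar>p (y + t *\<^sub>R axis i 1) - c\<bar> \<le> \<epsilon>"
  shows "\<bar>g (y + s *\<^sub>R axis i 1) - g y - c * s\<bar> \<le> \<epsilon> * \<bar>s\<bar>"
proof -
  define \<phi> where "\<phi> t = g (y + t *\<^sub>R axis i 1) - c * t" for t
  have "(\<phi> has_real_derivative p (y + t *\<^sub>R axis i 1) - c) (at t within closed_segment 0 s)" for t
  proof -
    have "((\<lambda>\<tau>. g (y + (t + \<tau>) *\<^sub>R axis i 1)) has_real_derivative p (y + t *\<^sub>R axis i 1)) (at 0)"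
      using pd[of "y + t *\<^sub>R axis i 1"] by (simp add: algebra_simps scaleR_add_left)
    then have "((\<lambda>\<tau>. g (y + \<tau> *\<^sub>R axis i 1)) has_real_derivative p (y + t *\<^sub>R axis i 1)) (at t)"
      using DERIV_shift[of _ _ 0 t] by (simp add: add.commute)
    then have "(\<phi> has_real_derivative p (y + t *\<^sub>R axis i 1) - c * 1) (at t)"
      unfolding \<phi>_def by (intro DERIV_diff DERIV_cmult DERIV_ident)
    then show ?thesis by (simp add: has_field_derivative_at_within)
  qed
  moreover have "\<bar>p (y + t *\<^sub>R axis i 1) - c\<bar> \<le> \<epsilon>" if "t \<in> closed_segment 0 s" for t
    using that by (intro close) (auto simp: closed_segment_eq_real_ivl split: if_splits)
  ultimately have "norm (\<phi> s - \<phi> 0) \<le> \<epsilon> * norm (s - 0)"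
    by (intro field_differentiable_bound[of "closed_segment 0 s"]) auto
  then show ?thesis by (simp add: \<phi>_def)
qed

lemma coordinate_increments_bound:
  fixes g :: "real^'n \<Rightarrow> real" and p :: "'n \<Rightarrow> real^'n \<Rightarrow> real" and x h :: "real^'n"
  assumes pd: "\<And>i z. ((\<lambda>t. g (z + t *\<^sub>R axis i 1)) has_real_derivative p i z) (at 0)"
    and close: "\<And>i z. norm (z - x) \<le> (\<Sum>a\<in>UNIV. \<bar>h $ a\<bar>) \<Longrightarrow> \<bar>p i z - p i x\<bar> \<le> \<epsilon>"
  shows "\<bar>g (x + (\<chi> a. if a \<in> S then h $ a else 0)) - g x - (\<Sum>i\<in>S. p i x * h $ i)\<bar>
           \<le> \<epsilon> * (\<Sum>i\<in>S. \<bar>h $ i\<bar>)"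
proof (induction S rule: finite_induct[OF finite])
  case 1
  have "(\<chi> a. 0) = (0 :: real^'n)" by (simp add: vec_eq_iff)
  then show ?case by simp
next
  case (2 i S)
  define Q where "Q = (\<chi> a. if a \<in> S then h $ a else 0)"
  have Q_insert: "(\<chi> a. if a \<in> insert i S then h $ a else 0) = Q + h $ i *\<^sub>R axis i 1"
    using 2 by (auto simp: Q_def vec_eq_iff axis_def)
  have "\<bar>g (x + Q + h $ i *\<^sub>R axis i 1) - g (x + Q) - p i x * h $ i\<bar> \<le> \<epsilon> * \<bar>h $ i\<bar>"
  proof (rule partial_increment_bound[OF pd])
    fix t :: real assume t: "\<bar>t\<bar> \<le> \<bar>h $ i\<bar>"
    have "\<bar>(Q + t *\<^sub>R axis i 1) $ a\<bar> \<le> \<bar>h $ a\<bar>" for a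
      using t 2 by (auto simp: Q_def axis_def)
    then have "norm (Q + t *\<^sub>R axis i 1) \<le> (\<Sum>a\<in>UNIV. \<bar>h $ a\<bar>)"
      by (rule order_trans[OF norm_le_l1_cart sum_mono])
    then show "\<bar>p i (x + Q + t *\<^sub>R axis i 1) - p i x\<bar> \<le> \<epsilon>"
      by (intro close) (simp add: add.assoc)
  qed
  then show ?case
    using 2(3) unfolding Q_insert sum.insert[OF 2(1,2)] Q_def[symmetric]
    by (simp add: add.assoc distrib_left abs_le_iff)
qed

lemma continuous_on_finite_family_delta:
  fixes p :: "'i::finite \<Rightarrow> 'a::metric_space \<Rightarrow> real"
  assumes "\<And>i. continuous_on UNIV (p i)" and "\<epsilon> > 0"
  obtains d where "d > 0" "\<And>z i. dist z x < d \<Longrightarrow> \<bar>p i z - p i x\<bar> < \<epsilon>"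
proof -
  have "\<forall>\<^sub>F z in at x. \<forall>i. dist (p i z) (p i x) < \<epsilon>"
  proof (rule eventually_all_finite)
    fix i
    have "(p i \<longlongrightarrow> p i x) (at x)"
      using assms(1)[of i] by (simp add: continuous_on_eq_continuous_at isCont_def)
    then show "\<forall>\<^sub>F z in at x. dist (p i z) (p i x) < \<epsilon>" using assms(2) by (rule tendstoD)
  qed
  then obtain d where d: "d > 0" "\<And>z i. z \<noteq> x \<Longrightarrow> dist z x < d \<Longrightarrow> dist (p i z) (p i x) < \<epsilon>"
    unfolding eventually_at by blast
  show ?thesis
  proof (rule that[OF d(1)])
    fix z i assume "dist z x < d"
    then show "\<bar>p i z - p i x\<bar> < \<epsilon>"
      using d(2)[of z i] assms(2) by (cases "z = x") (auto simp: dist_real_def)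
  qed
qed

lemma has_derivative_continuous_partials:
  fixes g :: "real^'n \<Rightarrow> real" and p :: "'n \<Rightarrow> real^'n \<Rightarrow> real"
  assumes pd: "\<And>i z. ((\<lambda>t. g (z + t *\<^sub>R axis i 1)) has_real_derivative p i z) (at 0)"
    and cont: "\<And>i. continuous_on UNIV (p i)"
  shows "(g has_derivative (\<lambda>h. \<Sum>i\<in>UNIV. p i x * h $ i)) (at x)"
  unfolding has_derivative_at_alt
proof (intro conjI allI impI)
  show "bounded_linear (\<lambda>h. \<Sum>i\<in>UNIV. p i x * h $ i)"
    by (intro bounded_linear_sum bounded_linear_compose[OF bounded_linear_mult_right bounded_linear_vec_nth])
  fix e :: real assume e: "e > 0"
  define N where "N = real CARD('n)"
  have N: "N > 0" by (simp add: N_def)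
  define \<epsilon> where "\<epsilon> = e / N"
  have \<epsilon>: "\<epsilon> > 0" using e N by (simp add: \<epsilon>_def)
  obtain d where d: "d > 0" "\<And>z i. dist z x < d \<Longrightarrow> \<bar>p i z - p i x\<bar> < \<epsilon>"
    using continuous_on_finite_family_delta[where p=p and x=x, OF cont \<epsilon>] by blast
  show "\<exists>d>0. \<forall>y. norm (y - x) < d \<longrightarrow>
          norm (g y - g x - (\<Sum>i\<in>UNIV. p i x * (y - x) $ i)) \<le> e * norm (y - x)"
  proof (intro exI[of _ "d / N"] conjI allI impI)
    show "d / N > 0" using d N by simp
    fix y assume y: "norm (y - x) < d / N"
    define h where "h = y - x"
    have l1: "(\<Sum>a\<in>UNIV. \<bar>h $ a\<bar>) \<le> N * norm h"
      using sum_mono[of UNIV "\<lambda>a. \<bar>h $ a\<bar>" "\<lambda>a. norm h"] component_le_norm_cart[of h]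
      by (simp add: N_def)
    have "\<bar>p i z - p i x\<bar> \<le> \<epsilon>" if "norm (z - x) \<le> (\<Sum>a\<in>UNIV. \<bar>h $ a\<bar>)" for i z
    proof -
      have "dist z x < d" using that l1 y N by (simp add: dist_norm h_def field_simps)
      then show ?thesis using d(2)[of z i] by simp
    qed
    note coordinate_increments_bound[where h=h and S=UNIV, OF pd this]
    moreover have "x + (\<chi> a. if a \<in> UNIV then h $ a else 0) = y" by (simp add: h_def vec_eq_iff)
    ultimately have "\<bar>g y - g x - (\<Sum>i\<in>UNIV. p i x * h $ i)\<bar> \<le> \<epsilon> * (\<Sum>i\<in>UNIV. \<bar>h $ i\<bar>)"
      by simp
    also have "\<dots> \<le> e * norm h"
      using mult_left_mono[OF l1, of \<epsilon>] e N by (simp add: \<epsilon>_def)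
    finally show "norm (g y - g x - (\<Sum>i\<in>UNIV. p i x * (y - x) $ i)) \<le> e * norm (y - x)"
      by (simp add: h_def)
  qed
qed

lemma has_real_derivative_partial:
  "partial_exists i g x \<Longrightarrow> ((\<lambda>t. g (x + t *\<^sub>R axis i 1)) has_real_derivative partial i g x) (at 0)"
  unfolding partial_exists_def partial_def by (simp add: DERIV_deriv_iff_real_differentiable)

lemma canalytic_on_has_derivative:
  fixes f :: "real^'n \<Rightarrow> real^'n"
  assumes "canalytic_on idx UNIV f"
  shows "(f has_derivative (\<lambda>h. \<chi> m. \<Sum>i\<in>UNIV. partial i (\<lambda>y. f y $ m) x * h $ i)) (at x)"
proof -
  have partials: "\<forall>m i j. (\<forall>x\<in>UNIV. partial_exists i (\<lambda>y. f y $ m) x) \<and>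
      (\<forall>x\<in>UNIV. partial_exists j (partial i (\<lambda>y. f y $ m)) x) \<and>
      continuous_on UNIV (partial j (partial i (\<lambda>y. f y $ m)))"
    using assms unfolding canalytic_on_def by (rule conjunct2)
  have "continuous_on UNIV (partial i (\<lambda>y. f y $ m))" for i m
  proof -
    have "(partial i (\<lambda>y. f y $ m) has_derivative
        (\<lambda>h. \<Sum>j\<in>UNIV. partial j (partial i (\<lambda>y. f y $ m)) z * h $ j)) (at z)" for z
      using partials by (intro has_derivative_continuous_partials has_real_derivative_partial) auto
    then show ?thesis by (meson continuous_at_imp_continuous_on has_derivative_continuous)
  qed
  then have component: "((\<lambda>y. f y $ m) has_derivative
      (\<lambda>h. \<Sum>i\<in>UNIV. partial i (\<lambda>y. f y $ m) x * h $ i)) (at x)" for m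
    using partials by (intro has_derivative_continuous_partials has_real_derivative_partial) auto
  show ?thesis
  proof (rule iffD2[OF has_derivative_componentwise_within[where S=UNIV]], rule ballI)
    fix b :: "real^'n" assume "b \<in> Basis"
    then obtain m where b: "b = axis m 1" using axis_inverse by blast
    show "((\<lambda>x. f x \<bullet> b) has_derivative
        (\<lambda>h. (\<chi> m. \<Sum>i\<in>UNIV. partial i (\<lambda>y. f y $ m) x * h $ i) \<bullet> b)) (at x)"
      unfolding b inner_axis using component[of m] by simp
  qed
qed

lemma has_derivative_difference_quotient:
  assumes fd: "(f has_derivative Lf) (at a)"
  shows "((\<lambda>t. (1/t) *\<^sub>R (f (a + t *\<^sub>R h) - f a)) \<longlongrightarrow> Lf h) (at 0)"
proof -
  have "((\<lambda>t::real. a + t *\<^sub>R h) has_derivative (\<lambda>t. t *\<^sub>R h)) (at 0)"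
    by (auto intro!: derivative_eq_intros)
  moreover have "(f has_derivative Lf) (at (a + 0 *\<^sub>R h))" using fd by simp
  ultimately have "((\<lambda>t. f (a + t *\<^sub>R h)) has_derivative (\<lambda>t. t *\<^sub>R Lf h)) (at 0)"
    by (rule has_derivative_compose[THEN has_derivative_eq_rhs])
      (simp add: fun_eq_iff linear_scale[OF has_derivative_linear[OF fd]])
  then have lim: "((\<lambda>t. norm (f (a + t *\<^sub>R h) - f a - t *\<^sub>R Lf h) / norm t) \<longlongrightarrow> 0) (at 0)"
    by (simp add: has_derivative_at)
  have "\<forall>\<^sub>F t in at (0::real). t \<noteq> 0" by (rule eventually_neq_at_within)
  then have "\<forall>\<^sub>F t in at 0. norm (f (a + t *\<^sub>R h) - f a - t *\<^sub>R Lf h) / norm t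
          = norm ((1/t) *\<^sub>R (f (a + t *\<^sub>R h) - f a) - Lf h)"
  proof (rule eventually_mono)
    fix t :: real assume "t \<noteq> 0"
    then have "(1/t) *\<^sub>R (f (a + t *\<^sub>R h) - f a) - Lf h = (1/t) *\<^sub>R (f (a + t *\<^sub>R h) - f a - t *\<^sub>R Lf h)"
      by (simp add: scaleR_diff_right)
    then show "norm (f (a + t *\<^sub>R h) - f a - t *\<^sub>R Lf h) / norm t
          = norm ((1/t) *\<^sub>R (f (a + t *\<^sub>R h) - f a) - Lf h)"
      by (simp add: divide_inverse mult.commute)
  qed
  with lim have "((\<lambda>t. norm ((1/t) *\<^sub>R (f (a + t *\<^sub>R h) - f a) - Lf h)) \<longlongrightarrow> 0) (at 0)"
    by (rule Lim_transform_eventually)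
  then show ?thesis
    unfolding tendsto_norm_zero_iff LIM_zero_iff .
qed

section \<open>Liouville's theorem along complex lines\<close>

text \<open>On every affine complex line \<open>x + range R\<close> the function is entire and bounded, and along the
  real directions in the kernel of \<open>L\<close> its derivative vanishes.\<close>

lemma constant_if_bounded_and_complex_derivative:
  fixes F :: "'a::real_normed_vector \<Rightarrow> complex"
  assumes L: "bounded_linear L" and R: "bounded_linear R" and LR: "\<And>z. L (R z) = z"
    and dF: "\<And>x. (F has_derivative (\<lambda>h. c x * L h)) (at x)"
    and bdd: "bounded (range F)"
  shows "F y = F x"
proof -
  define g where "g z = F (x + R z)" for z
  have "(g has_field_derivative c (x + R z)) (at z)" for z
  proof -
    have "((\<lambda>z. x + R z) has_derivative R) (at z)"
      by (auto intro!: derivative_eq_intros bounded_linear.has_derivative[OF R])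
    from has_derivative_compose[OF this dF]
    show ?thesis unfolding g_def has_field_derivative_def by (simp add: o_def LR)
  qed
  then have "g holomorphic_on UNIV"
    by (meson field_differentiable_def field_differentiable_at_within holomorphic_on_def)
  moreover have "bounded (range g)"
    using bdd by (rule bounded_subset) (auto simp: g_def)
  ultimately have g_const: "g z = g 0" for z
    using Liouville_theorem unfolding constant_on_def by (metis UNIV_I)
  define p where "p = x + R (L (y - x))"
  define d where "d = y - p"
  have Ld: "L d = 0"
    by (simp add: d_def p_def LR linear_diff[OF bounded_linear.linear[OF L]] linear_add[OF bounded_linear.linear[OF L]])
  have "((\<lambda>t. F (p + t *\<^sub>R d)) has_derivative (\<lambda>s. 0)) (at t within UNIV)" for t
  proof -
    have "((\<lambda>t::real. p + t *\<^sub>R d) has_derivative (\<lambda>s. s *\<^sub>R d)) (at t)"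
      by (auto intro!: derivative_eq_intros)
    from has_derivative_compose[OF this dF]
    show ?thesis by (simp add: o_def linear_scale[OF bounded_linear.linear[OF L]] Ld)
  qed
  then obtain k where "\<And>t. F (p + t *\<^sub>R d) = k"
    using has_derivative_zero_constant[of UNIV "\<lambda>t. F (p + t *\<^sub>R d)"] by auto
  then have "F (p + 1 *\<^sub>R d) = F (p + 0 *\<^sub>R d)" by metis
  then have "F y = g (L (y - x))" by (simp add: d_def p_def g_def)
  also have "\<dots> = g 0" by (rule g_const)
  also have "\<dots> = F x" by (simp add: g_def linear_0[OF bounded_linear.linear[OF R]])
  finally show ?thesis .
qed

lemma matrix_mult_row: "(A ** B) $ i = (\<Sum>c\<in>UNIV. A $ i $ c *\<^sub>R B $ c)"
  by (simp add: vec_eq_iff matrix_matrix_mult_def sum_component)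

lemma sum_if_eq_scaleR: "(\<Sum>c\<in>UNIV. (if c = a then 1 else 0) *\<^sub>R (v c :: 'b::real_vector)) = v (a::'n::finite)"
proof -
  have "(\<Sum>c\<in>UNIV. (if c = a then 1 else 0) *\<^sub>R v c) = (\<Sum>c\<in>UNIV. if c = a then v c else 0)"
    by (intro sum.cong) auto
  then show ?thesis by simp
qed

lemma matrix_sum_mult: "(\<Sum>i\<in>S. A i) ** B = (\<Sum>i\<in>S. A i ** B)"
  by (induction S rule: infinite_finite_induct)
    (auto simp: vec_eq_iff matrix_matrix_mult_def sum.distrib distrib_right)

lemma matrix_mult_sum: "B ** (\<Sum>i\<in>S. A i) = (\<Sum>i\<in>S. B ** A i)"
  by (induction S rule: infinite_finite_induct) (auto simp: matrix_add_ldistrib)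

lemma inj_add_large_scalar_matrix:
  fixes H :: "real^'n^'n"
  assumes c: "c > (\<Sum>a\<in>UNIV. \<Sum>b\<in>UNIV. \<bar>H $ a $ b\<bar>)"
  shows "inj ((*v) (H + c *\<^sub>R mat 1))"
proof -
  have "x = 0" if x: "(H + c *\<^sub>R mat 1) *v x = 0" for x
  proof (rule ccontr)
    assume "x \<noteq> 0"
    have "Max (range (\<lambda>b. \<bar>x $ b\<bar>)) \<in> range (\<lambda>b. \<bar>x $ b\<bar>)" by (rule Max_in) auto
    then obtain a where a_max: "Max (range (\<lambda>b. \<bar>x $ b\<bar>)) = \<bar>x $ a\<bar>" by blast
    have a: "\<bar>x $ b\<bar> \<le> \<bar>x $ a\<bar>" for b
      using Max_ge[of "range (\<lambda>b. \<bar>x $ b\<bar>)" "\<bar>x $ b\<bar>"] unfolding a_max by simp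
    have xa: "\<bar>x $ a\<bar> > 0"
    proof -
      obtain b where "x $ b \<noteq> 0" using \<open>x \<noteq> 0\<close> by (auto simp: vec_eq_iff)
      then show ?thesis using a[of b] by linarith
    qed
    have "((H + c *\<^sub>R mat 1) *v x) $ a = (\<Sum>b\<in>UNIV. H $ a $ b * x $ b + (if b = a then c * x $ b else 0))"
      by (simp add: matrix_vector_mult_def mat_def distrib_right) (intro sum.cong, auto)
    then have "((H + c *\<^sub>R mat 1) *v x) $ a = (\<Sum>b\<in>UNIV. H $ a $ b * x $ b) + c * x $ a"
      by (simp add: sum.distrib)
    then have eq: "c * x $ a = - (\<Sum>b\<in>UNIV. H $ a $ b * x $ b)" using x by simp
    have "c > 0" using c sum_nonneg[of UNIV "\<lambda>a. \<Sum>b\<in>UNIV. \<bar>H $ a $ b\<bar>"] by simp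
    then have "c * \<bar>x $ a\<bar> = \<bar>c * x $ a\<bar>" by (simp add: abs_mult)
    also have "\<dots> = \<bar>\<Sum>b\<in>UNIV. H $ a $ b * x $ b\<bar>" unfolding eq by (rule abs_minus_cancel)
    also have "\<dots> \<le> (\<Sum>b\<in>UNIV. \<bar>H $ a $ b\<bar>) * \<bar>x $ a\<bar>"
      by (rule order_trans[OF sum_abs])
        (auto intro!: sum_mono simp: abs_mult mult_left_mono a sum_distrib_right)
    also have "\<dots> \<le> (\<Sum>a\<in>UNIV. \<Sum>b\<in>UNIV. \<bar>H $ a $ b\<bar>) * \<bar>x $ a\<bar>"
      by (intro mult_right_mono member_le_sum) (auto intro: sum_nonneg)
    also have "\<dots> < c * \<bar>x $ a\<bar>"
      using c xa by (rule mult_strict_right_mono)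
    finally show False by simp
  qed
  then show ?thesis
    by (metis (no_types, lifting) injI matrix_vector_mult_diff_distrib right_minus_eq)
qed

definition cmatvec :: "real^'n^'m \<Rightarrow> complex^'n \<Rightarrow> complex^'m" where
  "cmatvec M v = (\<chi> a. \<Sum>b\<in>UNIV. complex_of_real (M $ a $ b) * v $ b)"

lemma cmatvec_mult: "cmatvec (A ** B) v = cmatvec A (cmatvec B v)"
proof -
  have "cmatvec (A ** B) v $ a = cmatvec A (cmatvec B v) $ a" for a
  proof -
    have "cmatvec (A ** B) v $ a
        = (\<Sum>b\<in>UNIV. \<Sum>c\<in>UNIV. complex_of_real (A$a$c) * (complex_of_real (B$c$b) * v$b))"
      unfolding cmatvec_def matrix_matrix_mult_def by (simp add: sum_distrib_right mult.assoc)
    also have "\<dots> = (\<Sum>c\<in>UNIV. \<Sum>b\<in>UNIV. complex_of_real (A$a$c) * (complex_of_real (B$c$b) * v$b))"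
      by (rule sum.swap)
    also have "\<dots> = cmatvec A (cmatvec B v) $ a"
      unfolding cmatvec_def by (simp add: sum_distrib_left)
    finally show ?thesis .
  qed
  then show ?thesis by (simp add: vec_eq_iff)
qed

lemma cmatvec_sum: "cmatvec (\<Sum>i\<in>S. A i) v = (\<Sum>i\<in>S. cmatvec (A i) v)"
  by (induction S rule: infinite_finite_induct)
    (auto simp: cmatvec_def vec_eq_iff distrib_right sum.distrib)

lemma cmatvec_scaleR: "cmatvec (c *\<^sub>R A) v = complex_of_real c *s cmatvec A v"
  unfolding cmatvec_def by (simp add: vec_eq_iff sum_distrib_left mult.assoc)

lemma cmatvec_smult: "cmatvec A (c *s v) = c *s cmatvec A v"
  unfolding cmatvec_def by (simp add: vec_eq_iff sum_distrib_left mult.left_commute)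

lemma of_real_if_zero_mult: "complex_of_real (if P then a else 0) * x = (if P then complex_of_real a * x else 0)"
  by simp

section \<open>The skew-circulant algebra\<close>

lemma Im_nonzero_if_even_power_eq_minus_1:
  fixes w :: complex
  assumes "w ^ n = -1" "even n"
  shows "Im w \<noteq> 0"
proof
  assume "Im w = 0"
  then have "complex_of_real (Re w ^ n) = -1"
    using assms(1) by (metis complex_is_Real_iff of_real_Re of_real_power)
  then have "Re w ^ n = -1" by (metis of_real_eq_iff of_real_minus of_real_1)
  with zero_le_even_power[OF assms(2), of "Re w"] show False by simp
qed

locale skew_circulant =
  fixes idx :: "nat \<Rightarrow> 'n::finite"
  assumes idx_bij: "bij_betw idx {1..CARD('n)} (UNIV :: 'n set)"
    and card_ge_2: "2 \<le> CARD('n)"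
begin

abbreviation "G \<equiv> gmat idx"
abbreviation "evec l \<equiv> (axis (idx l) 1 :: real^'n)"

lemma inj_on_idx: "inj_on idx {1..CARD('n)}"
  using idx_bij bij_betw_def by blast

lemma pos_idx [simp]: "l \<in> {1..CARD('n)} \<Longrightarrow> pos idx (idx l) = l"
  unfolding pos_def using inj_on_idx by (simp add: inv_into_f_f)

lemma idx_pos [simp]: "idx (pos idx a) = a"
  unfolding pos_def using idx_bij by (simp add: bij_betw_def f_inv_into_f)

lemma pos_in_range: "pos idx a \<in> {1..CARD('n)}"
  unfolding pos_def using idx_bij by (metis bij_betw_def inv_into_into UNIV_I)

lemma pos_ge_1 [simp]: "Suc 0 \<le> pos idx a" and pos_le_card [simp]: "pos idx a \<le> CARD('n)"
  using pos_in_range by auto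

lemma pos_eq_iff: "l \<in> {1..CARD('n)} \<Longrightarrow> pos idx a = l \<longleftrightarrow> a = idx l"
  by (metis idx_pos pos_idx)

lemma sum_reindex_idx: "(\<Sum>l\<in>{1..CARD('n)}. h (idx l)) = (\<Sum>a\<in>UNIV. h a)"
  using sum.reindex[OF inj_on_idx, of h] idx_bij by (simp add: bij_betw_def)

lemma gmat_entry:
  assumes "1 \<le> l" "l < CARD('n)"
  shows "G $ idx l $ c = (if c = idx (Suc l) then 1 else 0)"
  using assms pos_eq_iff[of "Suc l" c] unfolding gmat_def by simp

lemma gmat_last_entry: "G $ idx CARD('n) $ c = (if c = idx 1 then -1 else 0)"
proof -
  have "pos idx c \<noteq> CARD('n) + 1" using pos_le_card[of c] by linarith
  then show ?thesis using card_ge_2 pos_eq_iff[of 1 c] unfolding gmat_def by simp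
qed

lemma gmat_mult_row:
  assumes "1 \<le> l" "l < CARD('n)"
  shows "(G ** X) $ idx l = X $ idx (Suc l)"
  using assms by (simp add: matrix_mult_row gmat_entry sum_if_eq_scaleR)

lemma mpow_gmat_row: "1 \<le> l \<Longrightarrow> l + m \<le> CARD('n) \<Longrightarrow> mpow G m $ idx l = evec (l + m)"
proof (induction m arbitrary: l)
  case 0
  then show ?case by (auto simp: vec_eq_iff mat_def axis_def)
next
  case (Suc m)
  then have "mpow G (Suc m) $ idx l = mpow G m $ idx (Suc l)"
    by (simp add: gmat_mult_row)
  also have "\<dots> = evec (l + Suc m)" using Suc by simp
  finally show ?case .
qed

lemma mpow_commute: "G ** X = X ** G \<Longrightarrow> mpow G m ** X = X ** mpow G m"
proof (induction m)
  case (Suc m)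
  have "mpow G (Suc m) ** X = G ** (mpow G m ** X)" by (simp add: matrix_mul_assoc)
  also have "\<dots> = (G ** X) ** mpow G m" using Suc by (simp add: matrix_mul_assoc)
  also have "\<dots> = X ** mpow G (Suc m)" using Suc by (simp add: matrix_mul_assoc)
  finally show ?case .
qed simp

lemma mpow_mpow_commute: "mpow G a ** mpow G b = mpow G b ** mpow G a"
  by (rule mpow_commute) (metis matrix_mul_lid matrix_mul_rid mpow_commute)

lemma mpow_mult_first_row:
  assumes "l \<in> {1..CARD('n)}"
  shows "(mpow G (l - 1) ** X) $ idx 1 = X $ idx l"
proof -
  have "mpow G (l - 1) $ idx 1 = evec l" using assms mpow_gmat_row[of 1 "l - 1"] by auto
  then show ?thesis by (simp add: matrix_mult_row axis_def sum_if_eq_scaleR)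
qed

lemma varsigma_row:
  assumes "l \<in> {1..CARD('n)}"
  shows "varsigma idx w $ idx l = (\<Sum>c\<in>UNIV. w $ c *\<^sub>R mpow G (l - 1) $ c)"
proof -
  have "mpow G (m - 1) $ idx l = mpow G (l - 1) $ idx m" if m: "m \<in> {1..CARD('n)}" for m
    using mpow_mult_first_row[OF assms, of "mpow G (m - 1)"] mpow_mult_first_row[OF m, of "mpow G (l - 1)"]
    by (simp add: mpow_mpow_commute)
  then have "varsigma idx w $ idx l = (\<Sum>m\<in>{1..CARD('n)}. w $ idx m *\<^sub>R mpow G (l - 1) $ idx m)"
    unfolding varsigma_def by (simp add: sum_component)
  also have "\<dots> = (\<Sum>c\<in>UNIV. w $ c *\<^sub>R mpow G (l - 1) $ c)"
    by (rule sum_reindex_idx)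
  finally show ?thesis .
qed

lemma varsigma_first_row [simp]: "varsigma idx w $ idx 1 = w"
proof -
  have "varsigma idx w $ idx 1 = (\<Sum>c\<in>UNIV. w $ c *\<^sub>R mat 1 $ c)"
    using varsigma_row[of 1 w] card_ge_2 by simp
  also have "\<dots> = w"
    by (simp add: vec_eq_iff sum_component mat_def if_distrib cong: if_cong)
  finally show ?thesis .
qed

lemma varsigma_inj: "varsigma idx u = varsigma idx v \<Longrightarrow> u = v"
  by (metis varsigma_first_row)

lemma commuting_eq_varsigma:
  assumes "G ** X = X ** G"
  shows "varsigma idx (X $ idx 1) = X"
proof -
  have "varsigma idx (X $ idx 1) $ idx l = X $ idx l" if l: "l \<in> {1..CARD('n)}" for l
  proof -
    have "X $ idx l = (X ** mpow G (l - 1)) $ idx 1"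
      using mpow_mult_first_row[OF l, of X] mpow_commute[OF assms] by simp
    also have "\<dots> = varsigma idx (X $ idx 1) $ idx l" by (simp add: matrix_mult_row varsigma_row[OF l])
    finally show ?thesis by simp
  qed
  then show ?thesis by (metis idx_pos pos_in_range vec_eq_iff)
qed

lemma gmat_varsigma_commute: "G ** varsigma idx w = varsigma idx w ** G"
  unfolding varsigma_def matrix_sum_mult matrix_mult_sum
  by (intro sum.cong refl)
    (metis matrix_scalar_ac scalar_matrix_assoc matrix_mul_lid matrix_mul_rid mpow_commute)

lemma varsigma_cstar: "varsigma idx (cstar idx u v) = varsigma idx u ** varsigma idx v"
proof -
  have "G ** (varsigma idx u ** varsigma idx v) = (varsigma idx u ** varsigma idx v) ** G"
    by (metis matrix_mul_assoc gmat_varsigma_commute)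
  then have "varsigma idx w = varsigma idx u ** varsigma idx v \<longleftrightarrow> w = (varsigma idx u ** varsigma idx v) $ idx 1" for w
    by (metis commuting_eq_varsigma varsigma_first_row)
  then show ?thesis unfolding cstar_def by (simp add: commuting_eq_varsigma)
qed

lemma varsigma_evec_1: "varsigma idx (evec 1) = mat 1"
proof -
  have "(mat 1 :: real^'n^'n) $ idx 1 = evec 1" by (simp add: vec_eq_iff mat_def axis_def)
  then show ?thesis using commuting_eq_varsigma[of "mat 1"] by simp
qed

lemmas varsigma_evec_Suc_0 [simp] = varsigma_evec_1[unfolded One_nat_def]

lemma cunit_eq: "cunit idx = evec 1"
  unfolding cunit_def using varsigma_evec_1 varsigma_inj by (intro the_equality) auto

lemma Gset_iff: "x \<in> Gset idx \<longleftrightarrow> invertible (varsigma idx x)"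
  by (simp add: Gset_def invertible_det_nz)

lemma cstar_cinv:
  assumes "d \<in> Gset idx"
  shows "cstar idx d (cinv idx d) = evec 1"
proof -
  obtain B where B: "varsigma idx d ** B = mat 1" "B ** varsigma idx d = mat 1"
    using assms unfolding Gset_iff invertible_def by blast
  have "G ** B = (B ** varsigma idx d) ** G ** B" using B by simp
  also have "\<dots> = B ** (G ** varsigma idx d) ** B" by (simp add: gmat_varsigma_commute matrix_mul_assoc)
  also have "\<dots> = B ** G" using B by (simp add: matrix_mul_assoc[symmetric])
  finally have "varsigma idx (B $ idx 1) = B" by (rule commuting_eq_varsigma)
  then have "cstar idx d w = evec 1 \<longleftrightarrow> w = B $ idx 1" for w
    using B varsigma_cstar[of d w] varsigma_evec_1
    by (metis matrix_mul_assoc matrix_mul_lid varsigma_inj)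
  then show ?thesis unfolding cinv_def cunit_eq by simp
qed

lemma varsigma_add: "varsigma idx (u + v) = varsigma idx u + varsigma idx v"
  unfolding varsigma_def by (simp add: scaleR_add_left sum.distrib)

lemma varsigma_scaleR: "varsigma idx (c *\<^sub>R u) = c *\<^sub>R varsigma idx u"
  unfolding varsigma_def by (simp add: scaleR_sum_right)

lemma scaleR_in_Gset:
  assumes "d \<in> Gset idx" "c \<noteq> 0"
  shows "c *\<^sub>R d \<in> Gset idx"
proof -
  obtain B where "varsigma idx d ** B = mat 1"
    using assms unfolding Gset_iff invertible_def by blast
  then have "(c *\<^sub>R varsigma idx d) ** ((1/c) *\<^sub>R B) = mat 1"
    using assms by (simp add: matrix_scalar_ac scalar_matrix_assoc[symmetric])
  then show ?thesis unfolding Gset_iff varsigma_scaleR invertible_right_inverse by blast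
qed

lemma evec_1_in_Gset: "evec 1 \<in> Gset idx"
  by (simp add: Gset_def)

lemma zero_notin_Gset: "0 \<notin> Gset idx"
proof
  assume "0 \<in> Gset idx"
  then obtain B where "varsigma idx 0 ** B = mat 1" unfolding Gset_iff invertible_def by blast
  moreover have "varsigma idx 0 = 0" using varsigma_scaleR[of 0 0] by simp
  ultimately have "(0 :: real^'n^'n) $ idx 1 $ idx 1 = mat 1 $ idx 1 $ idx 1" by simp
  then show False by (simp add: mat_def)
qed

lemma shift_in_Gset: "\<exists>c. h + c *\<^sub>R evec 1 \<in> Gset idx"
proof -
  define H where "H = varsigma idx h"
  define c where "c = (\<Sum>a\<in>UNIV. \<Sum>b\<in>UNIV. \<bar>H $ a $ b\<bar>) + 1"
  have "inj ((*v) (H + c *\<^sub>R mat 1))" by (rule inj_add_large_scalar_matrix) (simp add: c_def)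
  then have "det (H + c *\<^sub>R mat 1) \<noteq> 0"
    using det_nz_iff_inj[of "(*v) (H + c *\<^sub>R mat 1)"] by (simp add: matrix_of_matrix_vector_mul)
  then show ?thesis
    by (intro exI[of _ c]) (simp add: Gset_def varsigma_add varsigma_scaleR H_def)
qed

subsection \<open>Characters\<close>

definition root_vector :: "complex \<Rightarrow> complex^'n" where
  "root_vector w = (\<chi> a. w ^ (pos idx a - 1))"

definition character :: "complex \<Rightarrow> real^'n \<Rightarrow> complex" where
  "character w u = (\<Sum>a\<in>UNIV. complex_of_real (u $ a) * w ^ (pos idx a - 1))"

lemma cmatvec_gmat:
  assumes "w ^ CARD('n) = -1"
  shows "cmatvec G (root_vector w) = w *s root_vector w"
proof -
  have "cmatvec G (root_vector w) $ idx l = w * root_vector w $ idx l" if l: "l \<in> {1..CARD('n)}" for l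
  proof (cases "l < CARD('n)")
    case True
    have "cmatvec G (root_vector w) $ idx l
        = (\<Sum>b\<in>UNIV. if b = idx (Suc l) then w ^ (pos idx b - 1) else 0)"
      unfolding cmatvec_def root_vector_def using l True by (simp add: gmat_entry of_real_if_zero_mult)
    also have "\<dots> = w * root_vector w $ idx l"
      using l True by (simp add: root_vector_def power_Suc[symmetric])
    finally show ?thesis .
  next
    case False
    then have l: "l = CARD('n)" using l by simp
    have "cmatvec G (root_vector w) $ idx l
        = (\<Sum>b\<in>UNIV. if b = idx 1 then - (w ^ (pos idx b - 1)) else 0)"
      unfolding cmatvec_def root_vector_def l by (simp add: gmat_last_entry of_real_if_zero_mult)
    also have "\<dots> = w ^ CARD('n)" using card_ge_2 assms by simp
    also have "\<dots> = w * root_vector w $ idx l"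
      using l card_ge_2 by (simp add: root_vector_def power_Suc[symmetric])
    finally show ?thesis .
  qed
  then show ?thesis by (metis idx_pos pos_in_range vec_eq_iff vector_smult_component)
qed

lemma cmatvec_mpow_gmat:
  assumes "w ^ CARD('n) = -1"
  shows "cmatvec (mpow G m) (root_vector w) = w ^ m *s root_vector w"
proof (induction m)
  case 0
  then show ?case by (simp add: cmatvec_def vec_eq_iff mat_def of_real_if_zero_mult)
next
  case (Suc m)
  have "cmatvec (mpow G (Suc m)) (root_vector w) = cmatvec G (w ^ m *s root_vector w)"
    by (simp add: cmatvec_mult Suc)
  also have "\<dots> = w ^ m *s (w *s root_vector w)" by (simp add: cmatvec_smult cmatvec_gmat[OF assms])
  finally show ?case by (simp add: vec_eq_iff mult_ac)
qed

lemma character_idx: "character w u = (\<Sum>l\<in>{1..CARD('n)}. complex_of_real (u $ idx l) * w ^ (l - 1))"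
  unfolding character_def sum_reindex_idx[symmetric] by (intro sum.cong) auto

lemma cmatvec_varsigma:
  assumes "w ^ CARD('n) = -1"
  shows "cmatvec (varsigma idx u) (root_vector w) = character w u *s root_vector w"
  unfolding varsigma_def cmatvec_sum cmatvec_scaleR cmatvec_mpow_gmat[OF assms] character_idx
  by (simp add: vec_eq_iff sum_distrib_right sum_component mult.assoc)

lemma character_cstar:
  assumes "w ^ CARD('n) = -1"
  shows "character w (cstar idx u v) = character w u * character w v"
proof -
  have first_row: "character w (M $ idx 1) = cmatvec M (root_vector w) $ idx 1" for M
    unfolding character_def cmatvec_def root_vector_def by simp
  have "character w (cstar idx u v) = cmatvec (varsigma idx u ** varsigma idx v) (root_vector w) $ idx 1"
    by (metis first_row varsigma_cstar varsigma_first_row)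
  also have "\<dots> = character w u * character w v * root_vector w $ idx 1"
    by (simp add: cmatvec_mult cmatvec_varsigma[OF assms] cmatvec_smult)
  also have "root_vector w $ idx 1 = 1" using card_ge_2 by (simp add: root_vector_def)
  finally show ?thesis by simp
qed

lemma character_evec: "l \<in> {1..CARD('n)} \<Longrightarrow> character w (evec l) = w ^ (l - 1)"
  unfolding character_def by (simp add: axis_def of_real_if_zero_mult)

lemma character_scaleR: "character w (c *\<^sub>R u) = complex_of_real c * character w u"
  by (simp add: character_def sum_distrib_left mult.assoc)

lemma bounded_linear_character: "bounded_linear (character w)"
proof -
  have "linear (character w)"
  proof (rule linearI)
    show "character w (c *\<^sub>R u) = c *\<^sub>R character w u" for c u
      by (subst character_scaleR) (simp add: scaleR_conv_of_real)
  qed (simp add: character_def distrib_right sum.distrib)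
  then show ?thesis using linear_conv_bounded_linear by blast
qed

lemmas character_add = linear_add[OF bounded_linear.linear[OF bounded_linear_character]]
lemmas character_diff = linear_diff[OF bounded_linear.linear[OF bounded_linear_character]]

lemma character_cinv:
  assumes "w ^ CARD('n) = -1" "d \<in> Gset idx"
  shows "character w d * character w (cinv idx d) = 1"
  using character_cstar[OF assms(1), of d "cinv idx d"] cstar_cinv[OF assms(2)] character_evec[of 1 w] card_ge_2
  by simp

lemma character_derivative_on_Gset:
  assumes w: "w ^ CARD('n) = -1" and fd: "(f has_derivative Lf) (at a)"
    and cd: "has_cderiv_at idx f D a" and hG: "h \<in> Gset idx"
  shows "character w (Lf h) = character w D * character w h"
proof -
  define q where "q d = cstar idx (f (a + d) - f a) (cinv idx d)" for d
  have nonzero: "\<forall>\<^sub>F t in at (0::real). t \<noteq> 0" by (rule eventually_neq_at_within)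
  have "filterlim (\<lambda>t::real. t *\<^sub>R h) (at 0 within Gset idx) (at 0)"
  proof (unfold filterlim_at, intro conjI)
    show "\<forall>\<^sub>F t in at 0. t *\<^sub>R h \<in> Gset idx \<and> t *\<^sub>R h \<noteq> 0"
      using nonzero hG zero_notin_Gset
      by (auto elim!: eventually_mono intro: scaleR_in_Gset)
    have "((\<lambda>t::real. t *\<^sub>R h) \<longlongrightarrow> 0 *\<^sub>R h) (at 0)" by (intro tendsto_intros)
    then show "((\<lambda>t::real. t *\<^sub>R h) \<longlongrightarrow> 0) (at 0)" by simp
  qed
  with cd have "((\<lambda>t. q (t *\<^sub>R h)) \<longlongrightarrow> D) (at 0)"
    unfolding has_cderiv_at_def q_def by (rule filterlim_compose)
  then have lim_q: "((\<lambda>t. character w (q (t *\<^sub>R h)) * character w h) \<longlongrightarrow> character w D * character w h) (at 0)"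
    by (intro tendsto_mult_right bounded_linear.tendsto[OF bounded_linear_character])
  have "\<forall>\<^sub>F t in at 0. character w ((1/t) *\<^sub>R (f (a + t *\<^sub>R h) - f a)) = character w (q (t *\<^sub>R h)) * character w h"
    using nonzero
  proof (rule eventually_mono)
    fix t :: real assume t: "t \<noteq> 0"
    have "character w (q (t *\<^sub>R h)) * character w h
        = character w (f (a + t *\<^sub>R h) - f a) * (character w (t *\<^sub>R h) * character w (cinv idx (t *\<^sub>R h))) / t"
      using t by (simp add: q_def character_cstar[OF w] character_scaleR)
    also have "\<dots> = character w ((1/t) *\<^sub>R (f (a + t *\<^sub>R h) - f a))"
      using character_cinv[OF w scaleR_in_Gset[OF hG t]]
      by (simp add: character_scaleR divide_inverse mult.commute)
    finally show "character w ((1/t) *\<^sub>R (f (a + t *\<^sub>R h) - f a)) = character w (q (t *\<^sub>R h)) * character w h" ..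
  qed
  from tendsto_cong[OF this] lim_q
  have lim1: "((\<lambda>t. character w ((1/t) *\<^sub>R (f (a + t *\<^sub>R h) - f a))) \<longlongrightarrow> character w D * character w h) (at 0)"
    by simp
  have lim2: "((\<lambda>t. character w ((1/t) *\<^sub>R (f (a + t *\<^sub>R h) - f a))) \<longlongrightarrow> character w (Lf h)) (at 0)"
    by (rule bounded_linear.tendsto[OF bounded_linear_character has_derivative_difference_quotient[OF fd]])
  show ?thesis using tendsto_unique[OF _ lim2 lim1] by simp
qed

text \<open>Both sides are linear in \<open>h\<close>, and every \<open>h\<close> is a difference of two elements of \<open>Gset idx\<close>.\<close>

lemma character_derivative:
  assumes w: "w ^ CARD('n) = -1" and fd: "(f has_derivative Lf) (at a)"
    and cd: "has_cderiv_at idx f D a"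
  shows "character w (Lf h) = character w D * character w h"
proof -
  obtain c where c: "h + c *\<^sub>R evec 1 \<in> Gset idx" using shift_in_Gset by blast
  show ?thesis
  proof (cases "c = 0")
    case True
    then show ?thesis using character_derivative_on_Gset[OF w fd cd c] by simp
  next
    case False
    have c1: "c *\<^sub>R evec 1 \<in> Gset idx" using scaleR_in_Gset[OF evec_1_in_Gset False] .
    have "Lf h = Lf (h + c *\<^sub>R evec 1) - Lf (c *\<^sub>R evec 1)"
      using linear_add[OF has_derivative_linear[OF fd]] by simp
    then have "character w (Lf h) = character w (Lf (h + c *\<^sub>R evec 1)) - character w (Lf (c *\<^sub>R evec 1))"
      by (metis character_diff)
    also have "\<dots> = character w D * (character w (h + c *\<^sub>R evec 1) - character w (c *\<^sub>R evec 1))"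
      by (simp only: character_derivative_on_Gset[OF w fd cd c] character_derivative_on_Gset[OF w fd cd c1]
          right_diff_distrib)
    also have "\<dots> = character w D * character w h" by (simp add: character_add)
    finally show ?thesis .
  qed
qed

lemma character_right_inverse:
  assumes "Im w \<noteq> 0"
  obtains R where "bounded_linear R" "\<And>z. character w (R z) = z"
proof
  define R where "R z = (Re z - Im z * Re w / Im w) *\<^sub>R evec 1 + (Im z / Im w) *\<^sub>R evec 2" for z
  show "bounded_linear R"
    unfolding R_def
    by (intro bounded_linear_add bounded_linear_compose[OF bounded_linear_scaleR_left] bounded_linear_sub bounded_linear_Re
        bounded_linear_compose[OF bounded_linear_divide] bounded_linear_compose[OF bounded_linear_mult_left]
        bounded_linear_Im)
  have "character w (evec 1) = 1" "character w (evec 2) = w"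
    using character_evec[of 1 w] character_evec[of 2 w] card_ge_2 by simp_all
  then show "character w (R z) = z" for z
    using assms by (simp add: R_def character_add character_scaleR complex_eq_iff field_simps)
qed

lemma eq_zero_if_characters_vanish:
  assumes "\<And>w. w ^ CARD('n) = -1 \<Longrightarrow> character w u = 0"
  shows "u = 0"
proof (rule ccontr)
  assume "u \<noteq> 0"
  then obtain a where a: "u $ a \<noteq> 0" by (auto simp: vec_eq_iff)
  define c where "c i = complex_of_real (u $ idx (Suc i))" for i
  have character_poly: "character w u = (\<Sum>i\<le>CARD('n) - 1. c i * w ^ i)" for w
  proof -
    have "{..<CARD('n)} = {..CARD('n) - 1}" using card_ge_2 by auto
    then show ?thesis
      unfolding character_idx c_def
      using sum.atLeast1_atMost_eq[of "\<lambda>l. complex_of_real (u $ idx l) * w ^ (l - 1)" "CARD('n)"]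
      by simp
  qed
  have "Suc (pos idx a - 1) = pos idx a" using pos_ge_1[of a] by linarith
  then have "c (pos idx a - 1) \<noteq> 0" using a by (simp add: c_def)
  moreover have "pos idx a - 1 \<le> CARD('n) - 1" using pos_le_card[of a] by linarith
  ultimately have "\<exists>k. k \<le> CARD('n) - 1 \<and> c k \<noteq> 0" by blast
  then have "finite {w. (\<Sum>i\<le>CARD('n) - 1. c i * w ^ i) = 0}
      \<and> card {w. (\<Sum>i\<le>CARD('n) - 1. c i * w ^ i) = 0} \<le> CARD('n) - 1"
    by (rule polyfun_rootbound)
  then have roots: "finite {w. character w u = 0}" "card {w. character w u = 0} \<le> CARD('n) - 1"
    by (simp_all add: character_poly)
  define \<omega> where "\<omega> = cis (pi / CARD('n))"
  have \<omega>: "\<omega> ^ CARD('n) = -1" unfolding \<omega>_def Complex.DeMoivre using card_ge_2 by simp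
  have "character (\<omega> * z) u = 0" if "z ^ CARD('n) = 1" for z
    using assms[of "\<omega> * z"] that \<omega> by (simp add: power_mult_distrib)
  then have "(\<lambda>z. \<omega> * z) ` {z. z ^ CARD('n) = 1} \<subseteq> {w. character w u = 0}" by blast
  then have "card ((\<lambda>z. \<omega> * z) ` {z. z ^ CARD('n) = 1}) \<le> CARD('n) - 1"
    using roots by (meson card_mono order_trans)
  moreover have "card ((\<lambda>z. \<omega> * z) ` {z. z ^ CARD('n) = 1}) = CARD('n)"
  proof -
    have "\<omega> \<noteq> 0" by (simp add: \<omega>_def)
    then have "inj_on (\<lambda>z. \<omega> * z) {z. z ^ CARD('n) = 1}" by (simp add: inj_on_def)
    then show ?thesis using card_complex_roots_unity[of "CARD('n)"] card_ge_2 by (simp add: card_image)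
  qed
  ultimately have "CARD('n) \<le> CARD('n) - 1" by (simp only:)
  then show False using card_ge_2 by simp
qed

lemma character_comp_constant:
  assumes "even CARD('n)" and w: "w ^ CARD('n) = -1"
    and fd: "\<And>x. (f has_derivative Lf x) (at x)" and cd: "\<And>x. has_cderiv_at idx f (D x) x"
    and bounded_f: "bounded (range f)"
  shows "character w (f y) = character w (f x)"
proof -
  from Im_nonzero_if_even_power_eq_minus_1[OF w assms(1)]
  obtain R where R: "bounded_linear R" "\<And>z. character w (R z) = z"
    by (rule character_right_inverse) blast
  have "((\<lambda>x. character w (f x)) has_derivative (\<lambda>h. character w (D x) * character w h)) (at x)" for x
  proof -
    have "character w (Lf x h) = character w (D x) * character w h" for h
      by (rule character_derivative[OF w fd cd])
    moreover have "((\<lambda>x. character w (f x)) has_derivative (\<lambda>h. character w (Lf x h))) (at x)"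
      by (rule bounded_linear.has_derivative[OF bounded_linear_character fd])
    ultimately show ?thesis by (simp only:)
  qed
  moreover have "bounded (range (\<lambda>x. character w (f x)))"
    using bounded_linear_image[OF bounded_f bounded_linear_character] by (simp only: image_image)
  ultimately show ?thesis
    by (rule constant_if_bounded_and_complex_derivative[OF bounded_linear_character R])
qed

end

theorem mainTheorem13:
  fixes k :: nat and idx :: "nat \<Rightarrow> 'n::finite" and f :: "real^'n \<Rightarrow> real^'n" and M :: real
  assumes "k \<ge> 1" and "CARD('n) = 2 * k"
    and "bij_betw idx {1..CARD('n)} (UNIV :: 'n set)"
    and "canalytic_on idx UNIV f"
    and "M > 0" and "\<forall>x. norm (f x) \<le> M"
  shows "\<exists>c. \<forall>x. f x = c"
proof -
  interpret skew_circulant idx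
    using assms(1-3) by unfold_locales auto
  have "\<forall>x. \<exists>D. has_cderiv_at idx f D x"
    using assms(4) unfolding canalytic_on_def cdifferentiable_at_def by blast
  then obtain D where cd: "\<And>x. has_cderiv_at idx f (D x) x" by metis
  define Lf where "Lf x h = (\<chi> m. \<Sum>i\<in>UNIV. partial i (\<lambda>y. f y $ m) x * h $ i)" for x h
  have fd: "(f has_derivative Lf x) (at x)" for x
    unfolding Lf_def by (rule canalytic_on_has_derivative[OF assms(4)])
  have bounded_f: "bounded (range f)"
    using assms(6) by (auto intro!: boundedI)
  have "even CARD('n)" using assms(2) by simp
  have "f y - f 0 = 0" for y
  proof (rule eq_zero_if_characters_vanish)
    fix w :: complex assume w: "w ^ CARD('n) = -1"
    have "character w (f y) = character w (f 0)"
      by (rule character_comp_constant[OF \<open>even CARD('n)\<close> w fd cd bounded_f])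
    then show "character w (f y - f 0) = 0" by (simp add: character_diff)
  qed
  then show ?thesis by (metis right_minus_eq)
qed

end
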